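(* Let $G$ be an infinite vertex-transitive graph of finite degree, let $K\subset V(G)$ be finite, let $y\in K$, and let $\sigma=(\tilde\eta^o_0,\tilde\eta^w_0)$ be an unstable particle configuration. Then for the ghost-pair stabilization of $K$ started from $\sigma$, \[ \tilde E_{K,\sigma}\bigl(\tilde m(y)\bigr)=\sum_{x\in K}\bigl(\tilde\eta^o_0(x)\wedge\tilde\eta^w_0(x)\bigr)\,G_K(x,y). \]
   Context: A particle configuration $(\eta^o,\eta^w)\in\mathbb{N}^{V(G)}\times\mathbb{N}^{V(G)}$ gives the numbers of oils and waters at each vertex; $x$ is stable if $\eta^o(x)\wedge\eta^w(x)=0$, and $\eta^o(x)\wedge\eta^w(x)$ is the number of (oil-water) pairs at $x$; $x$ is a hole if $\eta^o(x)=\eta^w(x)$. Ghost-pair stabilization of $K$: states are triples $(\tilde\eta^o,\tilde\eta^w,\tilde\eta^g)$, the last coordinate counting auxiliary particles called ghosts. Start with oils and waters as in $\sigma$ and no ghosts. At each step $t=0,1,2,\dots$: (i) either one ghost located at a vertex of $K$ makes one simple random walk step, or one oil-water pair at a vertex $b\in K$ (i.e. $b$ has at least one oil and one water) moves, meaning one oil and one water at $b$ each independently jump to a uniformly chosen neighbor of $b$; the choice of which ghost or pair moves is arbitrary (may depend on the past); (ii) if in (i) a water jumped into a vertex $x\in K$ which was a hole just before this step and after the step $x$ has exactly one more water than oils, a new ghost is created at $x$. Ghosts do not interact with oils, waters, or each other. The procedure stops at the first time $T$ at which $K$ is stable for oils and waters and no ghost is in $K$ ($T$ is a.s. finite). $\tilde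 m(y)$ is the total number of times that a ghost or an oil-water pair jumps from $y$, and $\tilde P_{K,\sigma},\tilde E_{K,\sigma}$ denote the law and expectation of this procedure. $G_K(x,y)=E_x\bigl[\sum_{t=0}^{\tau_{K^c}}\mathbf{1}\{X(t)=y\}\bigr]$, where $X$ is simple random walk on $G$ started at $x$ and $\tau_{K^c}=\inf\{t\ge0:X(t)\notin K\}$. *)

theory Defs
  imports "HOL-Probability.Probability"
begin

text \<open>A graph is given by a symmetric irreflexive adjacency relation on the
vertex type 'v (the vertex set is the whole type).\<close>

definition nbrs :: "('v \<Rightarrow> 'v \<Rightarrow> bool) \<Rightarrow> 'v \<Rightarrow> 'v set" where
  "nbrs adj v = {w. adj v w}"

definition graph_automorphism :: "('v \<Rightarrow> 'v \<Rightarrow> bool) \<Rightarrow> ('v \<Rightarrow> 'v) \<Rightarrow> bool" where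
  "graph_automorphism adj f \<longleftrightarrow> bij f \<and> (\<forall>a b. adj a b \<longleftrightarrow> adj (f a) (f b))"

definition infinite_vt_graph_finite_degree :: "('v \<Rightarrow> 'v \<Rightarrow> bool) \<Rightarrow> bool" where
  "infinite_vt_graph_finite_degree adj \<longleftrightarrow>
     (\<forall>a b. adj a b \<longrightarrow> adj b a) \<and>
     (\<forall>a. \<not> adj a a) \<and>
     (\<forall>a b. adj\<^sup>*\<^sup>* a b) \<and>
     infinite (UNIV :: 'v set) \<and>
     (\<forall>v. finite (nbrs adj v)) \<and>
     (\<forall>u v. \<exists>f. graph_automorphism adj f \<and> f u = v)"

definition unstable_config :: "('v \<Rightarrow> nat) \<Rightarrow> ('v \<Rightarrow> nat) \<Rightarrow> bool" where
  "unstable_config eo ew \<longleftrightarrow> (\<exists>x. min (eo x) (ew x) > 0)"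

text \<open>Distribution of the path (X(0),...,X(n)) of simple random walk from x.\<close>
fun srw_path :: "('v \<Rightarrow> 'v \<Rightarrow> bool) \<Rightarrow> 'v \<Rightarrow> nat \<Rightarrow> 'v list pmf" where
  "srw_path adj x 0 = return_pmf [x]"
| "srw_path adj x (Suc n) =
     srw_path adj x n \<bind> (\<lambda>p. map_pmf (\<lambda>z. p @ [z]) (pmf_of_set (nbrs adj (last p))))"

text \<open>Number of times t \<le> min(n, tau) with X(t) = y, where tau is the exit time of K
  (t \<le> tau iff X(s) \<in> K for all s < t).\<close>
definition visits_before_exit :: "'v set \<Rightarrow> 'v \<Rightarrow> 'v list \<Rightarrow> nat" where
  "visits_before_exit K y p =
     card {t. t < length p \<and> (\<forall>s<t. p ! s \<in> K) \<and> p ! t = y}"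

text \<open>G_K(x,y) = E_x[sum_{t=0}^{tau} 1{X(t)=y}], computed by monotone convergence
  as the supremum over the horizon n of the truncated expectations.\<close>
definition greenK :: "('v \<Rightarrow> 'v \<Rightarrow> bool) \<Rightarrow> 'v set \<Rightarrow> 'v \<Rightarrow> 'v \<Rightarrow> ennreal" where
  "greenK adj K x y =
     (SUP n. \<integral>\<^sup>+ p. of_nat (visits_before_exit K y p) \<partial>measure_pmf (srw_path adj x n))"

text \<open>A state is (oils, waters, ghosts).\<close>
type_synonym 'v gstate = "('v \<Rightarrow> nat) \<times> ('v \<Rightarrow> nat) \<times> ('v \<Rightarrow> nat)"

datatype 'v gmove = GhostMove 'v | PairMove 'v

fun gmove_loc :: "'v gmove \<Rightarrow> 'v" where
  "gmove_loc (GhostMove b) = b"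
| "gmove_loc (PairMove b) = b"

definition move1 :: "('v \<Rightarrow> nat) \<Rightarrow> 'v \<Rightarrow> 'v \<Rightarrow> ('v \<Rightarrow> nat)" where
  "move1 f a c = (\<lambda>x. f x - (if x = a then 1 else 0) + (if x = c then 1 else 0))"

definition gterminal :: "'v set \<Rightarrow> 'v gstate \<Rightarrow> bool" where
  "gterminal K s \<longleftrightarrow>
     (case s of (eo, ew, eg) \<Rightarrow> (\<forall>x\<in>K. min (eo x) (ew x) = 0) \<and> (\<forall>x\<in>K. eg x = 0))"

fun gvalid :: "'v set \<Rightarrow> 'v gstate \<Rightarrow> 'v gmove \<Rightarrow> bool" where
  "gvalid K (eo, ew, eg) (GhostMove b) \<longleftrightarrow> b \<in> K \<and> eg b > 0"
| "gvalid K (eo, ew, eg) (PairMove b) \<longleftrightarrow> b \<in> K \<and> eo b > 0 \<and> ew b > 0"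

fun gstep :: "('v \<Rightarrow> 'v \<Rightarrow> bool) \<Rightarrow> 'v set \<Rightarrow> 'v gstate \<Rightarrow> 'v gmove \<Rightarrow> 'v gstate pmf" where
  "gstep adj K (eo, ew, eg) (GhostMove b) =
     map_pmf (\<lambda>z. (eo, ew, move1 eg b z)) (pmf_of_set (nbrs adj b))"
| "gstep adj K (eo, ew, eg) (PairMove b) =
     map_pmf (\<lambda>(z1, z2).
        let eo' = move1 eo b z1; ew' = move1 ew b z2 in
        (eo', ew',
         if z2 \<in> K \<and> eo z2 = ew z2 \<and> ew' z2 = eo' z2 + 1
         then eg(z2 := eg z2 + 1) else eg))
       (pair_pmf (pmf_of_set (nbrs adj b)) (pmf_of_set (nbrs adj b)))"

text \<open>A (deterministic, history dependent) choice rule: given the history of states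
  s_0,...,s_t, it chooses which ghost (by location) or which pair moves.\<close>
definition admissible_strategy :: "'v set \<Rightarrow> ('v gstate list \<Rightarrow> 'v gmove) \<Rightarrow> bool" where
  "admissible_strategy K strat \<longleftrightarrow>
     (\<forall>ss. ss \<noteq> [] \<longrightarrow> \<not> gterminal K (last ss) \<longrightarrow> gvalid K (last ss) (strat ss))"

text \<open>Law of the history (states s_0..s_{min(n,T)}, moves made) up to time n;
  the procedure is frozen once it has stopped.\<close>
fun ghost_run :: "('v \<Rightarrow> 'v \<Rightarrow> bool) \<Rightarrow> 'v set \<Rightarrow> ('v gstate list \<Rightarrow> 'v gmove) \<Rightarrow>
                  'v gstate \<Rightarrow> nat \<Rightarrow> ('v gstate list \<times> 'v gmove list) pmf" where
  "ghost_run adj K strat s0 0 = return_pmf ([s0], [])"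
| "ghost_run adj K strat s0 (Suc n) =
     ghost_run adj K strat s0 n \<bind> (\<lambda>(ss, ms).
       if gterminal K (last ss) then return_pmf (ss, ms)
       else map_pmf (\<lambda>s'. (ss @ [s'], ms @ [strat ss])) (gstep adj K (last ss) (strat ss)))"

definition jumps_from :: "'v \<Rightarrow> 'v gmove list \<Rightarrow> nat" where
  "jumps_from y ms = length (filter (\<lambda>mv. gmove_loc mv = y) ms)"

text \<open>E_{K,sigma}(m(y)), via monotone convergence as a supremum over horizons n.\<close>
definition ghost_expected_jumps ::
  "('v \<Rightarrow> 'v \<Rightarrow> bool) \<Rightarrow> 'v set \<Rightarrow> ('v gstate list \<Rightarrow> 'v gmove) \<Rightarrow>
   ('v \<Rightarrow> nat) \<Rightarrow> ('v \<Rightarrow> nat) \<Rightarrow> 'v \<Rightarrow> ennreal" where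
  "ghost_expected_jumps adj K strat eo ew y =
     (SUP n. \<integral>\<^sup>+ h. of_nat (jumps_from y (snd h))
        \<partial>measure_pmf (ghost_run adj K strat (eo, ew, (\<lambda>_. 0)) n))"

end

theory Submission
  imports Defs
begin

text \<open>Give every oil-water pair and every ghost at \<open>x\<close> the weight \<open>G_K(x, y)\<close>. When a pair
  at \<open>b\<close> jumps, the oil landing at \<open>z1\<close> forms a new pair iff waters are in excess there, and
  the water landing at \<open>z2\<close> forms a new pair or a ghost iff oils are not in excess there; as the
  two conditions are complementary, the expected weight after the jump is the average of
  \<open>G_K(\<cdot>, y)\<close> over the neighbours of \<open>b\<close>, exactly as for a ghost. Since \<open>G_K(\<cdot>, y)\<close> is
  harmonic in \<open>K\<close> except at \<open>y\<close>, where it exceeds its average by \<open>1\<close>, the total weight plus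
  the number of jumps from \<open>y\<close> is a martingale, and it remains to show that the expected total
  weight at time \<open>n\<close> becomes small. Measuring weights instead by the expected exit time
  \<open>E_x \<tau>\<close>, which drops by \<open>1\<close> on average with every jump, the square of the total weight is a
  Lyapunov function that makes the expected total weights summable in time. Finiteness of all
  these quantities comes from the uniformly geometric decay of the probability that simple random
  walk stays in the finite set \<open>K\<close>.\<close>

locale finite_degree_graph =
  fixes adj :: "'v \<Rightarrow> 'v \<Rightarrow> bool"
  assumes finite_nbrs: "finite (nbrs adj v)"
    and nbrs_nonempty: "nbrs adj v \<noteq> {}"
    and no_loops: "\<not> adj v v"

locale connected_infinite_graph =
  fixes adj :: "'v \<Rightarrow> 'v \<Rightarrow> bool"
  assumes finite_nbrs: "finite (nbrs adj v)"
    and no_loops: "\<not> adj v v"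
    and connected: "adj\<^sup>*\<^sup>* a b"
    and infinite_vertices: "infinite (UNIV :: 'v set)"

sublocale connected_infinite_graph \<subseteq> finite_degree_graph
proof
  fix v :: 'v
  obtain w where "w \<noteq> v"
    using ex_new_if_finite[OF infinite_vertices, of "{v}"] by auto
  from connected[of v w] show "nbrs adj v \<noteq> {}"
    by (cases rule: converse_rtranclpE) (use \<open>w \<noteq> v\<close> in \<open>auto simp: nbrs_def\<close>)
qed (auto simp: finite_nbrs no_loops)

lemma infinite_vt_graph_finite_degree_imp_connected_infinite_graph:
  "infinite_vt_graph_finite_degree adj \<Longrightarrow> connected_infinite_graph adj"
  unfolding infinite_vt_graph_finite_degree_def connected_infinite_graph_def by blast

section \<open>The Green function of \<open>K\<close>\<close>

lemma visits_before_exit_Nil [simp]: "visits_before_exit K y [] = 0"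
  by (simp add: visits_before_exit_def)

lemma visits_before_exit_Cons:
  assumes "y \<in> K"
  shows "visits_before_exit K y (x # p) =
    (if x \<in> K then (if x = y then 1 else 0) + visits_before_exit K y p else 0)"
proof (cases "x \<in> K")
  case True
  let ?S = "{t. t < length p \<and> (\<forall>s<t. p ! s \<in> K) \<and> p ! t = y}"
  have "{t. t < length (x # p) \<and> (\<forall>s<t. (x # p) ! s \<in> K) \<and> (x # p) ! t = y}
      = (if x = y then {0} else {}) \<union> Suc ` ?S" (is "?L = _")
  proof (rule set_eqI)
    show "t \<in> ?L \<longleftrightarrow> t \<in> (if x = y then {0} else {}) \<union> Suc ` ?S" for t
      using True by (cases t) (auto simp: All_less_Suc2)
  qed
  then show ?thesis
    using True unfolding visits_before_exit_def
    by (simp only:) (subst card_Un_disjoint, auto simp: card_image)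
next
  case False
  have "{t. t < length (x # p) \<and> (\<forall>s<t. (x # p) ! s \<in> K) \<and> (x # p) ! t = y} = {}"
    using False assms by (auto simp: nth_Cons split: nat.splits)
  then show ?thesis using False unfolding visits_before_exit_def by simp
qed

lemma SUP_Suc_incseq:
  fixes f :: "nat \<Rightarrow> 'a::complete_lattice"
  assumes "incseq f"
  shows "(SUP n. f (Suc n)) = (SUP n. f n)"
  by (rule antisym; rule SUP_mono) (use assms in \<open>auto simp: incseq_Suc_iff\<close>)

context finite_degree_graph
begin

definition nbr_avg :: "('v \<Rightarrow> ennreal) \<Rightarrow> 'v \<Rightarrow> ennreal" where
  "nbr_avg f x = (\<integral>\<^sup>+z. f z \<partial>measure_pmf (pmf_of_set (nbrs adj x)))"

lemma nbr_avg_const [simp]: "nbr_avg (\<lambda>_. c) x = c"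
  by (simp add: nbr_avg_def finite_nbrs nbrs_nonempty measure_pmf.emeasure_space_1)

lemma nbr_avg_add: "nbr_avg (\<lambda>z. f z + g z) x = nbr_avg f x + nbr_avg g x"
  unfolding nbr_avg_def by (rule nn_integral_add) auto

lemma nbr_avg_cmult: "nbr_avg (\<lambda>z. c * f z) x = c * nbr_avg f x"
  unfolding nbr_avg_def by (rule nn_integral_cmult) auto

lemma nbr_avg_mono: "(\<And>z. f z \<le> g z) \<Longrightarrow> nbr_avg f x \<le> nbr_avg g x"
  unfolding nbr_avg_def by (rule nn_integral_mono) auto

lemma nbr_avg_sum: "finite I \<Longrightarrow> nbr_avg (\<lambda>z. \<Sum>i\<in>I. f i z) x = (\<Sum>i\<in>I. nbr_avg (f i) x)"
  unfolding nbr_avg_def by (rule nn_integral_sum) auto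

lemma nbr_avg_eq_mean: "nbr_avg f x = sum f (nbrs adj x) / of_nat (card (nbrs adj x))"
  unfolding nbr_avg_def by (subst nn_integral_pmf_of_set) (auto simp: finite_nbrs nbrs_nonempty)

lemma set_pmf_nbrs: "set_pmf (pmf_of_set (nbrs adj x)) = nbrs adj x"
  by (simp add: finite_nbrs nbrs_nonempty)

lemma nbrs_not_self: "z \<in> set_pmf (pmf_of_set (nbrs adj b)) \<Longrightarrow> z \<noteq> b"
  by (metis no_loops set_pmf_nbrs mem_Collect_eq nbrs_def)

lemma srw_path_nonempty: "p \<in> set_pmf (srw_path adj x n) \<Longrightarrow> p \<noteq> []"
  by (induction n arbitrary: p) (auto simp: set_pmf_nbrs)

text \<open>First-step decomposition of the walk, whereas the definition appends steps at the end.\<close>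
lemma srw_path_Suc_first:
  "srw_path adj x (Suc n) =
     pmf_of_set (nbrs adj x) \<bind> (\<lambda>z. map_pmf ((#) x) (srw_path adj z n))"
proof (induction n arbitrary: x)
  case 0
  then show ?case by (simp add: bind_return_pmf map_pmf_def)
next
  case (Suc n)
  have "srw_path adj x (Suc (Suc n)) = srw_path adj x (Suc n) \<bind>
      (\<lambda>p. map_pmf (\<lambda>w. p @ [w]) (pmf_of_set (nbrs adj (last p))))"
    by simp
  also have "\<dots> = pmf_of_set (nbrs adj x) \<bind>
      (\<lambda>z. map_pmf ((#) x) (srw_path adj z n) \<bind>
             (\<lambda>p. map_pmf (\<lambda>w. p @ [w]) (pmf_of_set (nbrs adj (last p)))))"
    by (subst Suc) (simp only: bind_assoc_pmf)
  also have "\<dots> = pmf_of_set (nbrs adj x) \<bind> (\<lambda>z. map_pmf ((#) x) (srw_path adj z (Suc n)))"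
    unfolding bind_map_pmf
    by (simp add: map_bind_pmf pmf.map_comp o_def cong: bind_pmf_cong)
      (intro bind_pmf_cong refl, auto dest: srw_path_nonempty)
  finally show ?case .
qed


definition green_trunc :: "'v set \<Rightarrow> 'v \<Rightarrow> nat \<Rightarrow> 'v \<Rightarrow> ennreal" where
  "green_trunc K y n x =
     (\<integral>\<^sup>+p. of_nat (visits_before_exit K y p) \<partial>measure_pmf (srw_path adj x n))"

lemma greenK_eq_SUP_green_trunc: "greenK adj K x y = (SUP n. green_trunc K y n x)"
  unfolding greenK_def green_trunc_def ..

lemma green_trunc_0: "y \<in> K \<Longrightarrow> green_trunc K y 0 x = (if x = y then 1 else 0)"
  unfolding green_trunc_def using visits_before_exit_Cons[of y K x "[]"] by auto

lemma green_trunc_Suc: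
  assumes "y \<in> K"
  shows "green_trunc K y (Suc n) x =
    (if x \<in> K then (if x = y then 1 else 0) + nbr_avg (green_trunc K y n) x else 0)"
proof -
  have "green_trunc K y (Suc n) x =
      (\<integral>\<^sup>+z. \<integral>\<^sup>+p. of_nat (visits_before_exit K y (x # p)) \<partial>measure_pmf (srw_path adj z n)
        \<partial>measure_pmf (pmf_of_set (nbrs adj x)))"
    unfolding green_trunc_def srw_path_Suc_first by simp
  also have "\<dots> = (if x \<in> K then
      \<integral>\<^sup>+z. (if x = y then 1 else 0) + green_trunc K y n z \<partial>measure_pmf (pmf_of_set (nbrs adj x))
      else 0)"
    unfolding green_trunc_def visits_before_exit_Cons[OF assms]
    by (auto intro!: nn_integral_cong simp: nn_integral_add measure_pmf.emeasure_space_1)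
  also have "\<dots> = (if x \<in> K then (if x = y then 1 else 0) + nbr_avg (green_trunc K y n) x else 0)"
    by (simp add: nn_integral_add nbr_avg_def finite_nbrs nbrs_nonempty measure_pmf.emeasure_space_1)
  finally show ?thesis .
qed

lemma green_trunc_incseq: "y \<in> K \<Longrightarrow> incseq (\<lambda>n. green_trunc K y n)"
proof (rule incseq_SucI, rule le_funI)
  show "y \<in> K \<Longrightarrow> green_trunc K y n x \<le> green_trunc K y (Suc n) x" for n x
  proof (induction n arbitrary: x)
    case (Suc n)
    then show ?case
      by (subst (1 2) green_trunc_Suc) (auto intro: add_left_mono nbr_avg_mono)
  qed (auto simp: green_trunc_0 green_trunc_Suc)
qed

lemma greenK_rec:
  assumes "y \<in> K"
  shows "greenK adj K x y =
    (if x \<in> K then (if x = y then 1 else 0) + nbr_avg (\<lambda>z. greenK adj K z y) x else 0)"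
proof -
  have inc: "incseq (\<lambda>n. green_trunc K y n)"
    using assms by (rule green_trunc_incseq)
  have "greenK adj K x y = (SUP n. green_trunc K y (Suc n) x)"
    unfolding greenK_eq_SUP_green_trunc
    by (rule SUP_Suc_incseq[symmetric]) (use inc in \<open>auto simp: incseq_def le_fun_def\<close>)
  also have "\<dots> = (SUP n. if x \<in> K then (if x = y then 1 else 0) + nbr_avg (green_trunc K y n) x else 0)"
    by (simp add: green_trunc_Suc[OF assms])
  also have "\<dots> = (if x \<in> K then (if x = y then 1 else 0) + nbr_avg (\<lambda>z. greenK adj K z y) x else 0)"
  proof -
    have "(SUP n. nbr_avg (green_trunc K y n) x) = nbr_avg (\<lambda>z. greenK adj K z y) x"
      unfolding nbr_avg_def greenK_eq_SUP_green_trunc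
      by (rule nn_integral_monotone_convergence_SUP[symmetric]) (use inc in auto)
    then show ?thesis
      by (simp add: ennreal_SUP_add_right[symmetric])
  qed
  finally show ?thesis .
qed

lemma greenK_outside: "y \<in> K \<Longrightarrow> x \<notin> K \<Longrightarrow> greenK adj K x y = 0"
  by (subst greenK_rec) auto


definition expected_exit_time :: "'v set \<Rightarrow> 'v \<Rightarrow> ennreal" where
  "expected_exit_time K x = (\<Sum>y\<in>K. greenK adj K x y)"

lemma expected_exit_time_outside: "x \<notin> K \<Longrightarrow> expected_exit_time K x = 0"
  by (simp add: expected_exit_time_def greenK_outside)

lemma expected_exit_time_rec:
  assumes "finite K" "x \<in> K"
  shows "expected_exit_time K x = 1 + nbr_avg (expected_exit_time K) x"
proof -
  have "expected_exit_time K x = (\<Sum>y\<in>K. (if x = y then 1 else 0) + nbr_avg (\<lambda>z. greenK adj K z y) x)"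
    unfolding expected_exit_time_def using assms(2) by (intro sum.cong refl) (subst greenK_rec, auto)
  also have "\<dots> = 1 + nbr_avg (expected_exit_time K) x"
    unfolding expected_exit_time_def using assms by (simp add: sum.distrib nbr_avg_sum)
  finally show ?thesis .
qed

lemma greenK_le_expected_exit_time: "finite K \<Longrightarrow> y \<in> K \<Longrightarrow> greenK adj K x y \<le> expected_exit_time K x"
  unfolding expected_exit_time_def by (rule member_le_sum) auto


section \<open>Finiteness of the Green function\<close>

definition killed_avg :: "'v set \<Rightarrow> ('v \<Rightarrow> ennreal) \<Rightarrow> 'v \<Rightarrow> ennreal" where
  "killed_avg K f x = (if x \<in> K then nbr_avg f x else 0)"

text \<open>The probability that the walk from \<open>x\<close> spends its first \<open>k\<close> steps in \<open>K\<close>.\<close>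
definition stay_prob :: "'v set \<Rightarrow> nat \<Rightarrow> 'v \<Rightarrow> ennreal" where
  "stay_prob K k = (killed_avg K ^^ k) (\<lambda>_. 1)"

lemma killed_avg_mono: "(\<And>z. f z \<le> g z) \<Longrightarrow> killed_avg K f x \<le> killed_avg K g x"
  by (auto simp: killed_avg_def intro: nbr_avg_mono)

lemma stay_prob_Suc: "stay_prob K (Suc k) x = killed_avg K (stay_prob K k) x"
  by (simp add: stay_prob_def)

lemma stay_prob_le_1: "stay_prob K k x \<le> 1"
proof (induction k arbitrary: x)
  case (Suc k)
  have "killed_avg K (stay_prob K k) x \<le> killed_avg K (\<lambda>_. 1) x"
    by (rule killed_avg_mono) (rule Suc)
  also have "\<dots> \<le> 1" by (simp add: killed_avg_def)
  finally show ?case by (simp add: stay_prob_Suc)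
qed (simp add: stay_prob_def)

lemma killed_avg_pow_le: "(\<And>z. g z \<le> c) \<Longrightarrow> (killed_avg K ^^ j) g x \<le> c * stay_prob K j x"
proof (induction j arbitrary: x)
  case (Suc j)
  have "(killed_avg K ^^ Suc j) g x \<le> killed_avg K (\<lambda>z. c * stay_prob K j z) x"
    using Suc by (simp add: killed_avg_mono)
  also have "\<dots> = c * stay_prob K (Suc j) x"
    by (simp add: stay_prob_Suc killed_avg_def nbr_avg_cmult)
  finally show ?case .
qed (simp add: stay_prob_def)

lemma green_trunc_add_le:
  assumes "y \<in> K"
  shows "green_trunc K y (n + j) x \<le> of_nat j + (killed_avg K ^^ j) (green_trunc K y n) x"
proof (induction j arbitrary: x)
  case (Suc j)
  have "green_trunc K y (Suc (n + j)) x \<le> 1 + killed_avg K (green_trunc K y (n + j)) x"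
    by (subst green_trunc_Suc[OF assms]) (auto simp: killed_avg_def intro: add_right_mono)
  also have "\<dots> \<le> 1 + killed_avg K (\<lambda>z. of_nat j + (killed_avg K ^^ j) (green_trunc K y n) z) x"
    by (intro add_left_mono killed_avg_mono Suc.IH)
  also have "\<dots> \<le> 1 + (of_nat j + (killed_avg K ^^ Suc j) (green_trunc K y n) x)"
    by (auto simp: killed_avg_def nbr_avg_add)
  finally show ?case by (simp add: add.assoc)
qed simp

lemma green_trunc_le:
  assumes y: "y \<in> K" and M: "0 < M" and p: "0 < p" "p \<le> 1"
    and stay: "\<And>x. stay_prob K M x \<le> ennreal (1 - p)"
  shows "green_trunc K y n x \<le> ennreal (real M / p)"
proof (induction n arbitrary: x rule: less_induct)
  case (less n)
  show ?case
  proof (cases "n < M")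
    case True
    have "green_trunc K y (0 + n) x \<le> of_nat n + (killed_avg K ^^ n) (green_trunc K y 0) x"
      by (rule green_trunc_add_le[OF y])
    also have "\<dots> \<le> of_nat n + 1 * stay_prob K n x"
      by (intro add_left_mono killed_avg_pow_le) (simp add: green_trunc_0[OF y])
    also have "\<dots> \<le> ennreal (real (Suc n))"
      using stay_prob_le_1[of K n x]
      by (simp add: ennreal_of_nat_eq_real_of_nat[symmetric] add_left_mono)
    also have "\<dots> \<le> ennreal (real M / p)"
    proof (rule ennreal_leI)
      have "real (Suc n) \<le> real M" using True by simp
      also have "\<dots> \<le> real M / p" using p by (simp add: le_divide_eq mult_left_le)
      finally show "real (Suc n) \<le> real M / p" .
    qed
    finally show ?thesis by simp
  next
    case False
    then obtain n' where n': "n = n' + M" by (metis add.commute le_Suc_ex not_less)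
    have "green_trunc K y (n' + M) x \<le> of_nat M + (killed_avg K ^^ M) (green_trunc K y n') x"
      by (rule green_trunc_add_le[OF y])
    also have "\<dots> \<le> of_nat M + ennreal (real M / p) * stay_prob K M x"
      using n' M by (intro add_left_mono killed_avg_pow_le less.IH) auto
    also have "\<dots> \<le> of_nat M + ennreal (real M / p) * ennreal (1 - p)"
      by (intro add_left_mono mult_left_mono stay) auto
    also have "\<dots> = ennreal (real M / p)"
    proof -
      have "real M + real M / p * (1 - p) = real M / p" using p by (simp add: field_simps)
      then show ?thesis using p
        by (simp add: ennreal_of_nat_eq_real_of_nat ennreal_mult[symmetric] ennreal_plus[symmetric])
    qed
    finally show ?thesis using n' by simp
  qed
qed


text \<open>From \<open>x\<close>, the walk leaves \<open>K\<close> within \<open>j\<close> steps with probability at least \<open>d ^ j\<close>.\<close>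
definition escapes_within :: "'v set \<Rightarrow> real \<Rightarrow> nat \<Rightarrow> 'v \<Rightarrow> bool" where
  "escapes_within K d j x \<longleftrightarrow> (\<forall>k>j. stay_prob K k x \<le> ennreal (1 - d ^ j))"

lemma escapes_within_outside: "x \<notin> K \<Longrightarrow> escapes_within K d 0 x"
  by (auto simp: escapes_within_def stay_prob_Suc killed_avg_def gr0_conv_Suc)

lemma escapes_within_mono:
  assumes "0 \<le> d" "d \<le> 1" "j \<le> j'" "escapes_within K d j x"
  shows "escapes_within K d j' x"
proof -
  have "ennreal (1 - d ^ j) \<le> ennreal (1 - d ^ j')"
    using assms by (intro ennreal_leI) (simp add: power_decreasing)
  then show ?thesis
    using assms(3,4) unfolding escapes_within_def by (meson le_less_trans order_trans)
qed

lemma escapes_within_Suc: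
  assumes x: "x \<in> K" and "adj x x'" and escape: "escapes_within K d j x'"
    and d: "0 \<le> d" "d \<le> 1 / card (nbrs adj x)"
  shows "escapes_within K d (Suc j) x"
  unfolding escapes_within_def
proof (intro allI impI)
  fix k assume "Suc j < k"
  then obtain k' where k: "k = Suc k'" "j < k'" by (cases k) auto
  let ?N = "nbrs adj x"
  let ?c = "real (card ?N)"
  have x': "x' \<in> ?N" using \<open>adj x x'\<close> by (simp add: nbrs_def)
  have c: "1 \<le> ?c" using finite_nbrs nbrs_nonempty by (simp add: Suc_le_eq card_gt_0_iff)
  have dj: "d ^ j \<le> 1"
    using d c by (intro power_le_one) (auto intro: order_trans[OF _ divide_le_eq_1[THEN iffD2]])
  have "sum (stay_prob K k') ?N = stay_prob K k' x' + sum (stay_prob K k') (?N - {x'})"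
    using x' finite_nbrs by (simp add: sum.remove)
  also have "\<dots> \<le> ennreal (1 - d ^ j) + sum (\<lambda>_. 1) (?N - {x'})"
    using escape k unfolding escapes_within_def by (intro add_mono sum_mono stay_prob_le_1) auto
  also have "\<dots> = ennreal (?c - d ^ j)"
    using x' finite_nbrs c dj
    by (simp add: card_Diff_singleton of_nat_diff ennreal_of_nat_eq_real_of_nat
        ennreal_plus[symmetric])
  finally have "stay_prob K k x \<le> ennreal (?c - d ^ j) / ennreal ?c"
    using x k by (simp add: stay_prob_Suc killed_avg_def nbr_avg_eq_mean divide_right_mono_ennreal
        ennreal_of_nat_eq_real_of_nat)
  also have "\<dots> = ennreal (1 - d ^ j / ?c)"
    using c dj by (subst divide_ennreal) (auto simp: diff_divide_distrib)
  also have "\<dots> \<le> ennreal (1 - d ^ Suc j)"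
  proof (rule ennreal_leI)
    have "d ^ Suc j = d ^ j * d" by simp
    also have "\<dots> \<le> d ^ j * (1 / ?c)"
      using d by (intro mult_left_mono) auto
    finally show "1 - d ^ j / ?c \<le> 1 - d ^ Suc j" by simp
  qed
  finally show "stay_prob K k x \<le> ennreal (1 - d ^ Suc j)" .
qed

end

context connected_infinite_graph
begin

text \<open>Follow a path from \<open>x\<close> to a vertex outside \<open>K\<close>; each of its steps inside \<open>K\<close> is
  taken with probability at least \<open>d\<close>.\<close>
lemma exists_escapes_within:
  assumes K: "finite K" and d: "0 \<le> d" "\<And>x. x \<in> K \<Longrightarrow> d \<le> 1 / card (nbrs adj x)"
  shows "\<exists>j. escapes_within K d j x"
proof -
  obtain w where w: "w \<notin> K" using ex_new_if_finite[OF infinite_vertices K] by auto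
  show ?thesis
    using connected[of x w]
  proof (induction rule: converse_rtranclp_induct)
    case base
    then show ?case using escapes_within_outside[OF w] by blast
  next
    case (step x x')
    then obtain j where "escapes_within K d j x'" by blast
    then show ?case
      using escapes_within_Suc[OF _ step(1) _ d] escapes_within_outside by blast
  qed
qed

lemma stay_prob_uniform_decay:
  assumes K: "finite K"
  obtains M p where "0 < M" "0 < p" "p \<le> 1" "\<And>x. stay_prob K M x \<le> ennreal (1 - p)"
proof (cases "K = {}")
  case True
  then show ?thesis
    using that[of 1 1] by (simp add: stay_prob_Suc killed_avg_def)
next
  case False
  define D where "D = Max (card ` nbrs adj ` K)"
  have deg: "1 \<le> card (nbrs adj x)" for x
    using finite_nbrs nbrs_nonempty by (simp add: Suc_le_eq card_gt_0_iff)
  have deg_D: "card (nbrs adj x) \<le> D" if "x \<in> K" for x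
    unfolding D_def using K that by (intro Max_ge) auto
  have D: "1 \<le> D" using False deg deg_D order_trans by blast
  define d :: real where "d = 1 / D"
  have d: "0 \<le> d" "d \<le> 1" "0 < d" using D by (auto simp: d_def)
  have d_deg: "d \<le> 1 / card (nbrs adj x)" if "x \<in> K" for x
    unfolding d_def using deg_D[OF that] deg[of x] by (intro divide_left_mono) auto
  obtain j where j: "\<And>x. escapes_within K d (j x) x"
    using exists_escapes_within[OF K d(1) d_deg] by metis
  define L where "L = Max (j ` K)"
  have escape_L: "escapes_within K d L x" for x
  proof (cases "x \<in> K")
    case True
    then have "j x \<le> L" unfolding L_def using K by (intro Max_ge) auto
    then show ?thesis using escapes_within_mono[OF d(1,2) _ j] by blast
  next
    case False
    then show ?thesis using escapes_within_mono[OF d(1,2) _ escapes_within_outside] by blast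
  qed
  show ?thesis
  proof (rule that[of "Suc L" "d ^ L"])
    show "stay_prob K (Suc L) x \<le> ennreal (1 - d ^ L)" for x
      using escape_L[of x] by (simp add: escapes_within_def)
  qed (use d in \<open>auto simp: power_le_one\<close>)
qed

lemma greenK_finite:
  assumes "finite K" "y \<in> K"
  shows "greenK adj K x y < \<top>"
proof -
  obtain M p where "0 < M" "0 < p" "p \<le> 1" "\<And>x. stay_prob K M x \<le> ennreal (1 - p)"
    using stay_prob_uniform_decay[OF assms(1)] by blast
  then have "greenK adj K x y \<le> ennreal (real M / p)"
    unfolding greenK_eq_SUP_green_trunc by (intro SUP_least green_trunc_le[OF assms(2)])
  then show ?thesis by (simp add: le_less_trans)
qed

lemma expected_exit_time_finite: "finite K \<Longrightarrow> expected_exit_time K x < \<top>"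
  by (simp add: expected_exit_time_def greenK_finite)

end

section \<open>Potentials of states\<close>

fun movers :: "'v gstate \<Rightarrow> 'v \<Rightarrow> nat" where
  "movers (eo, ew, eg) x = min (eo x) (ew x) + eg x"

definition potential :: "'v set \<Rightarrow> ('v \<Rightarrow> ennreal) \<Rightarrow> 'v gstate \<Rightarrow> ennreal" where
  "potential K f s = (\<Sum>x\<in>K. of_nat (movers s x) * f x)"

definition potential_without :: "'v set \<Rightarrow> ('v \<Rightarrow> ennreal) \<Rightarrow> 'v gstate \<Rightarrow> 'v \<Rightarrow> ennreal" where
  "potential_without K f s b = (\<Sum>x\<in>K. of_nat (movers s x - (if x = b then 1 else 0)) * f x)"

lemma potential_terminal: "gterminal K s \<Longrightarrow> potential K f s = 0"
  by (cases s) (auto simp: gterminal_def potential_def)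

lemma potential_finite:
  "finite K \<Longrightarrow> (\<And>x. x \<in> K \<Longrightarrow> f x < \<top>) \<Longrightarrow> potential K f s < \<top>"
  by (simp add: potential_def ennreal_mult_less_top of_nat_less_top)

lemma potential_mono: "(\<And>x. x \<in> K \<Longrightarrow> f x \<le> g x) \<Longrightarrow> potential K f s \<le> potential K g s"
  unfolding potential_def by (intro sum_mono mult_left_mono) auto

lemma gvalid_movers: "gvalid K s mv \<Longrightarrow> gmove_loc mv \<in> K \<and> 0 < movers s (gmove_loc mv)"
  by (cases s; cases mv) auto

lemma potential_remove:
  assumes "finite K" "b \<in> K" "0 < movers s b"
  shows "potential K f s = potential_without K f s b + f b"
proof -
  have "of_nat (movers s b) * f b = of_nat (movers s b - 1) * f b + f b"
    using assms(3) by (cases "movers s b") (simp_all add: distrib_right)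
  then show ?thesis
    using assms(1,2) unfolding potential_def potential_without_def
    by (simp add: sum.remove ac_simps)
qed

lemma potential_shift:
  assumes "\<And>x. x \<in> K \<Longrightarrow> movers s' x = (movers s x - (if x = b then 1 else 0)) + d x"
  shows "potential K f s' = potential_without K f s b + (\<Sum>x\<in>K. of_nat (d x) * f x)"
  unfolding potential_def potential_without_def sum.distrib[symmetric]
  by (intro sum.cong refl) (simp add: assms distrib_right)

lemma sum_indicator_mult:
  assumes "finite K" "\<And>x. x \<notin> K \<Longrightarrow> f x = 0"
  shows "(\<Sum>x\<in>K. of_nat (if x = z \<and> P then 1 else 0) * f x) = (if P then f z else (0::ennreal))"
proof -
  have "(\<Sum>x\<in>K. of_nat (if x = z \<and> P then 1 else 0) * f x) = (\<Sum>x\<in>K. if x = z \<and> P then f x else 0)"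
    by (rule sum.cong) auto
  also have "\<dots> = (if P then f z else 0)"
    using assms by (cases P) (auto simp: sum.delta)
  finally show ?thesis .
qed

lemma potential_ghost_move:
  assumes "finite K" "\<And>x. x \<notin> K \<Longrightarrow> f x = 0" "0 < eg b"
  shows "potential K f (eo, ew, move1 eg b z) = potential_without K f (eo, ew, eg) b + f z"
proof -
  have "potential K f (eo, ew, move1 eg b z) =
      potential_without K f (eo, ew, eg) b + (\<Sum>x\<in>K. of_nat (if x = z then 1 else 0) * f x)"
    using assms(3) by (intro potential_shift) (auto simp: move1_def)
  then show ?thesis using sum_indicator_mult[OF assms(1,2), where z = z and P = True] by simp
qed

definition pair_move :: "'v set \<Rightarrow> 'v gstate \<Rightarrow> 'v \<Rightarrow> 'v \<Rightarrow> 'v \<Rightarrow> 'v gstate" where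
  "pair_move K s b z1 z2 = (case s of (eo, ew, eg) \<Rightarrow>
     let eo' = move1 eo b z1; ew' = move1 ew b z2 in
     (eo', ew', if z2 \<in> K \<and> eo z2 = ew z2 \<and> ew' z2 = eo' z2 + 1 then eg(z2 := eg z2 + 1) else eg))"

lemma gstep_PairMove:
  "gstep adj K s (PairMove b) =
     map_pmf (\<lambda>(z1, z2). pair_move K s b z1 z2) (pair_pmf (pmf_of_set (nbrs adj b)) (pmf_of_set (nbrs adj b)))"
  by (cases s) (simp add: pair_move_def)

text \<open>If oil and water land on the same hole they form a pair, and no ghost is created.\<close>
lemma movers_pair_move:
  fixes eo ew eg :: "'v \<Rightarrow> nat"
  assumes "0 < eo b" "0 < ew b" "z1 \<noteq> b" "z2 \<noteq> b" "x \<in> K"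
  shows "movers (pair_move K (eo, ew, eg) b z1 z2) x =
    (movers (eo, ew, eg) x - (if x = b then 1 else 0))
      + ((if x = z1 \<and> eo z1 < ew z1 then 1 else 0) + (if x = z2 \<and> ew z2 \<le> eo z2 then 1 else 0))"
proof -
  have ghost: "(z2 \<in> K \<and> eo z2 = ew z2 \<and> move1 ew b z2 z2 = move1 eo b z1 z2 + 1) \<longleftrightarrow>
      (z2 \<in> K \<and> eo z2 = ew z2 \<and> z1 \<noteq> z2)"
    using assms by (auto simp: move1_def)
  show ?thesis
    unfolding pair_move_def prod.case Let_def ghost
    using assms by (cases "x = b"; cases "x = z1"; cases "x = z2") (auto simp: move1_def min_def)
qed

lemma potential_pair_move:
  assumes "finite K" "\<And>x. x \<notin> K \<Longrightarrow> f x = 0"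
    and "0 < eo b" "0 < ew b" "z1 \<noteq> b" "z2 \<noteq> b"
  shows "potential K f (pair_move K (eo, ew, eg) b z1 z2) = potential_without K f (eo, ew, eg) b
      + ((if eo z1 < ew z1 then f z1 else 0) + (if ew z2 \<le> eo z2 then f z2 else 0))"
proof -
  let ?d = "\<lambda>x. (if x = z1 \<and> eo z1 < ew z1 then 1 else 0) + (if x = z2 \<and> ew z2 \<le> eo z2 then 1 else 0)"
  have "potential K f (pair_move K (eo, ew, eg) b z1 z2) = potential_without K f (eo, ew, eg) b
      + (\<Sum>x\<in>K. of_nat (?d x) * f x)"
    using assms(3-) by (intro potential_shift) (simp add: movers_pair_move)
  also have "(\<Sum>x\<in>K. of_nat (?d x) * f x) =
      (\<Sum>x\<in>K. of_nat (if x = z1 \<and> eo z1 < ew z1 then 1 else 0) * f x)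
      + (\<Sum>x\<in>K. of_nat (if x = z2 \<and> ew z2 \<le> eo z2 then 1 else 0) * f x)"
    by (simp only: of_nat_add distrib_right sum.distrib)
  also have "\<dots> = (if eo z1 < ew z1 then f z1 else 0) + (if ew z2 \<le> eo z2 then f z2 else 0)"
    by (simp add: sum_indicator_mult[OF assms(1,2)])
  finally show ?thesis .
qed

lemma nn_integral_map_pmf_shift_moments:
  fixes \<nu> :: "'w pmf" and P :: "'s \<Rightarrow> ennreal"
  assumes shift: "\<And>\<omega>. \<omega> \<in> set_pmf \<nu> \<Longrightarrow> P (st \<omega>) = R + X \<omega>"
    and bound: "\<And>\<omega>. X \<omega> \<le> c" and mean: "(\<integral>\<^sup>+\<omega>. X \<omega> \<partial>measure_pmf \<nu>) = A"
  shows "(\<integral>\<^sup>+s. P s \<partial>measure_pmf (map_pmf st \<nu>)) = R + A"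
    and "(\<integral>\<^sup>+s. (P s)\<^sup>2 \<partial>measure_pmf (map_pmf st \<nu>)) \<le> R\<^sup>2 + 2 * R * A + c\<^sup>2"
proof -
  have "(\<integral>\<^sup>+s. P s \<partial>measure_pmf (map_pmf st \<nu>)) = (\<integral>\<^sup>+\<omega>. R + X \<omega> \<partial>measure_pmf \<nu>)"
    by simp (rule nn_integral_cong_AE, simp add: AE_measure_pmf_iff shift)
  also have "\<dots> = R + A"
    using mean by (subst nn_integral_add) (auto simp: measure_pmf.emeasure_space_1)
  finally show "(\<integral>\<^sup>+s. P s \<partial>measure_pmf (map_pmf st \<nu>)) = R + A" .
  have "(\<integral>\<^sup>+s. (P s)\<^sup>2 \<partial>measure_pmf (map_pmf st \<nu>)) = (\<integral>\<^sup>+\<omega>. (R + X \<omega>)\<^sup>2 \<partial>measure_pmf \<nu>)"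
    by simp (rule nn_integral_cong_AE, simp add: AE_measure_pmf_iff shift)
  also have "\<dots> \<le> (\<integral>\<^sup>+\<omega>. R\<^sup>2 + (2 * R) * X \<omega> + c\<^sup>2 \<partial>measure_pmf \<nu>)"
  proof (rule nn_integral_mono)
    have "(X \<omega>)\<^sup>2 \<le> c\<^sup>2" for \<omega> using bound by (intro power_mono) auto
    then show "(R + X \<omega>)\<^sup>2 \<le> R\<^sup>2 + (2 * R) * X \<omega> + c\<^sup>2" for \<omega>
      by (simp add: power2_sum mult.assoc add_left_mono)
  qed
  also have "\<dots> = R\<^sup>2 + 2 * R * A + c\<^sup>2"
    using mean by (simp add: nn_integral_add nn_integral_cmult measure_pmf.emeasure_space_1)
  finally show "(\<integral>\<^sup>+s. (P s)\<^sup>2 \<partial>measure_pmf (map_pmf st \<nu>)) \<le> R\<^sup>2 + 2 * R * A + c\<^sup>2" .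
qed

lemma nn_integral_pair_pmf_complementary:
  "(\<integral>\<^sup>+(z1, z2). (if P z1 then f z1 else 0) + (if \<not> P z2 then f z2 else 0) \<partial>measure_pmf (pair_pmf p p))
    = (\<integral>\<^sup>+z. f z \<partial>measure_pmf p)"
proof -
  have "(\<integral>\<^sup>+(z1, z2). (if P z1 then f z1 else 0) + (if \<not> P z2 then f z2 else 0) \<partial>measure_pmf (pair_pmf p p))
      = (\<integral>\<^sup>+z. (if P z then f z else 0) + (if \<not> P z then f z else 0) \<partial>measure_pmf p)"
    by (simp add: nn_integral_pair_pmf' nn_integral_add measure_pmf.emeasure_space_1)
  also have "\<dots> = (\<integral>\<^sup>+z. f z \<partial>measure_pmf p)"
    by (rule nn_integral_cong) auto
  finally show ?thesis .
qed

section \<open>The expected number of jumps\<close>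

lemma ghost_run_history_nonempty:
  "hh \<in> set_pmf (ghost_run adj K strat s0 n) \<Longrightarrow> fst hh \<noteq> []"
proof (induction n arbitrary: hh)
  case (Suc n)
  then obtain ss ms where run: "(ss, ms) \<in> set_pmf (ghost_run adj K strat s0 n)"
    and "hh \<in> set_pmf (if gterminal K (last ss) then return_pmf (ss, ms)
       else map_pmf (\<lambda>s'. (ss @ [s'], ms @ [strat ss])) (gstep adj K (last ss) (strat ss)))"
    by (auto simp: set_bind_pmf split: prod.splits)
  moreover have "ss \<noteq> []" using Suc.IH[OF run] by simp
  ultimately show ?case by (auto split: if_splits)
qed simp

lemma ghost_run_gvalid:
  assumes "admissible_strategy K strat" "hh \<in> set_pmf (ghost_run adj K strat s0 n)"
    and "\<not> gterminal K (last (fst hh))"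
  shows "gvalid K (last (fst hh)) (strat (fst hh))"
  using assms ghost_run_history_nonempty unfolding admissible_strategy_def by blast

lemma nn_integral_ghost_run_Suc:
  "(\<integral>\<^sup>+hh. F hh \<partial>measure_pmf (ghost_run adj K strat s0 (Suc n))) =
   (\<integral>\<^sup>+hh. (if gterminal K (last (fst hh)) then F hh
      else \<integral>\<^sup>+s'. F (fst hh @ [s'], snd hh @ [strat (fst hh)])
             \<partial>measure_pmf (gstep adj K (last (fst hh)) (strat (fst hh))))
     \<partial>measure_pmf (ghost_run adj K strat s0 n))"
  by (simp add: case_prod_beta) (rule nn_integral_cong, auto)

lemma nn_integral_ghost_run_Suc_eq:
  assumes "\<And>hh. hh \<in> set_pmf (ghost_run adj K strat s0 n) \<Longrightarrow> \<not> gterminal K (last (fst hh)) \<Longrightarrow>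
      (\<integral>\<^sup>+s'. F (fst hh @ [s'], snd hh @ [strat (fst hh)])
         \<partial>measure_pmf (gstep adj K (last (fst hh)) (strat (fst hh)))) = F hh"
  shows "(\<integral>\<^sup>+hh. F hh \<partial>measure_pmf (ghost_run adj K strat s0 (Suc n))) =
    (\<integral>\<^sup>+hh. F hh \<partial>measure_pmf (ghost_run adj K strat s0 n))"
  unfolding nn_integral_ghost_run_Suc
  by (rule nn_integral_cong_AE) (simp add: AE_measure_pmf_iff assms)

lemma nn_integral_ghost_run_Suc_le:
  assumes "\<And>hh. hh \<in> set_pmf (ghost_run adj K strat s0 n) \<Longrightarrow> \<not> gterminal K (last (fst hh)) \<Longrightarrow>
      (\<integral>\<^sup>+s'. F (fst hh @ [s'], snd hh @ [strat (fst hh)])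
         \<partial>measure_pmf (gstep adj K (last (fst hh)) (strat (fst hh)))) + G hh \<le> F hh"
    and "\<And>hh. gterminal K (last (fst hh)) \<Longrightarrow> G hh = 0"
  shows "(\<integral>\<^sup>+hh. F hh \<partial>measure_pmf (ghost_run adj K strat s0 (Suc n)))
      + (\<integral>\<^sup>+hh. G hh \<partial>measure_pmf (ghost_run adj K strat s0 n))
    \<le> (\<integral>\<^sup>+hh. F hh \<partial>measure_pmf (ghost_run adj K strat s0 n))"
  unfolding nn_integral_ghost_run_Suc
  by (subst nn_integral_add[symmetric]) (auto intro!: nn_integral_mono_AE simp: AE_measure_pmf_iff assms)

lemma jumps_from_snoc:
  "jumps_from y (ms @ [mv]) = jumps_from y ms + (if gmove_loc mv = y then 1 else 0)"
  by (simp add: jumps_from_def)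

lemma ennreal_drift_bound:
  fixes R A B c :: ennreal
  assumes "B = 1 + A" "B \<le> c"
  shows "R\<^sup>2 + 2 * R * A + (2 * c)\<^sup>2 + ((2 * c)\<^sup>2 + 2 * c) * (R + A) + 2 * (R + B)
    \<le> (R + B)\<^sup>2 + ((2 * c)\<^sup>2 + 2 * c) * (R + B)"
proof -
  define C where "C = (2 * c)\<^sup>2 + 2 * c"
  let ?common = "R\<^sup>2 + 2 * R + 2 * R * A + C * R + C * A"
  have lhs: "R\<^sup>2 + 2 * R * A + (2 * c)\<^sup>2 + C * (R + A) + 2 * (R + B) = ?common + ((2 * c)\<^sup>2 + 2 * B)"
    by (simp add: algebra_simps)
  have rhs: "(R + B)\<^sup>2 + C * (R + B) = ?common + (B\<^sup>2 + C)"
    unfolding power2_sum assms(1) by (simp add: algebra_simps)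
  have "(2 * c)\<^sup>2 + 2 * B \<le> C"
    using assms(2) unfolding C_def by (intro add_left_mono mult_left_mono) auto
  then have "(2 * c)\<^sup>2 + 2 * B \<le> B\<^sup>2 + C"
    by (simp add: add_increasing)
  then show ?thesis
    unfolding C_def[symmetric] lhs rhs by (rule add_left_mono)
qed

context finite_degree_graph
begin

text \<open>At most two new movers appear, whence the error term \<open>(2 * c)\<^sup>2\<close>.\<close>
lemma gstep_potential_moments:
  assumes valid: "gvalid K s mv" and K: "finite K" and f0: "\<And>x. x \<notin> K \<Longrightarrow> f x = 0"
    and fc: "\<And>x. f x \<le> c"
  defines "b \<equiv> gmove_loc mv"
  shows "(\<integral>\<^sup>+s'. potential K f s' \<partial>measure_pmf (gstep adj K s mv)) =
           potential_without K f s b + nbr_avg f b"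
    and "(\<integral>\<^sup>+s'. (potential K f s')\<^sup>2 \<partial>measure_pmf (gstep adj K s mv)) \<le>
           (potential_without K f s b)\<^sup>2 + 2 * potential_without K f s b * nbr_avg f b + (2 * c)\<^sup>2"
proof -
  obtain eo ew eg where s: "s = (eo, ew, eg)" by (cases s)
  let ?U = "pmf_of_set (nbrs adj b)"
  let ?R = "potential_without K f s b"
  have "(\<integral>\<^sup>+s'. potential K f s' \<partial>measure_pmf (gstep adj K s mv)) = ?R + nbr_avg f b \<and>
      (\<integral>\<^sup>+s'. (potential K f s')\<^sup>2 \<partial>measure_pmf (gstep adj K s mv)) \<le>
        ?R\<^sup>2 + 2 * ?R * nbr_avg f b + (2 * c)\<^sup>2"
  proof (cases mv)
    case (GhostMove b')
    have pos: "0 < eg b" using valid by (simp add: s GhostMove b_def)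
    let ?st = "\<lambda>z. (eo, ew, move1 eg b z)"
    have step: "gstep adj K s mv = map_pmf ?st ?U"
      by (simp add: s GhostMove b_def)
    have "potential K f (?st z) = ?R + f z" for z
      unfolding s using potential_ghost_move[where eg = eg and b = b, OF K f0 pos] by simp
    moreover have "f z \<le> 2 * c" for z
      using fc[of z] by (simp add: mult_2 add_increasing2)
    ultimately show ?thesis
      using nn_integral_map_pmf_shift_moments[where P = "potential K f" and st = ?st and \<nu> = ?U,
          OF _ _ refl]
      unfolding step nbr_avg_def by blast
  next
    case (PairMove b')
    have pos: "0 < eo b" "0 < ew b" using valid by (simp_all add: s PairMove b_def)
    let ?X = "\<lambda>(z1, z2). (if eo z1 < ew z1 then f z1 else 0) + (if ew z2 \<le> eo z2 then f z2 else 0)"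
    let ?st = "\<lambda>(z1, z2). pair_move K s b z1 z2"
    have step: "gstep adj K s mv = map_pmf ?st (pair_pmf ?U ?U)"
      by (simp add: PairMove b_def gstep_PairMove)
    have "potential K f (?st \<omega>) = ?R + ?X \<omega>" if "\<omega> \<in> set_pmf (pair_pmf ?U ?U)" for \<omega>
      using that pos by (auto simp: s intro!: potential_pair_move[OF K f0] dest: nbrs_not_self)
    moreover have "?X \<omega> \<le> 2 * c" for \<omega>
      using fc by (cases \<omega>) (auto simp: mult_2 intro: add_mono order_trans[OF _ add_increasing2])
    moreover have "(\<integral>\<^sup>+\<omega>. ?X \<omega> \<partial>measure_pmf (pair_pmf ?U ?U)) = nbr_avg f b"
      using nn_integral_pair_pmf_complementary[where P = "\<lambda>z. eo z < ew z" and f = f and p = ?U]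
      by (simp add: nbr_avg_def not_less)
    ultimately show ?thesis
      using nn_integral_map_pmf_shift_moments[where P = "potential K f" and st = ?st]
      unfolding step by blast
  qed
  then show "(\<integral>\<^sup>+s'. potential K f s' \<partial>measure_pmf (gstep adj K s mv)) = ?R + nbr_avg f b"
    and "(\<integral>\<^sup>+s'. (potential K f s')\<^sup>2 \<partial>measure_pmf (gstep adj K s mv)) \<le>
        ?R\<^sup>2 + 2 * ?R * nbr_avg f b + (2 * c)\<^sup>2"
    by auto
qed

lemma green_potential_step:
  assumes "finite K" "y \<in> K" "gvalid K s mv"
  shows "(\<integral>\<^sup>+s'. potential K (\<lambda>x. greenK adj K x y) s' \<partial>measure_pmf (gstep adj K s mv))
      + (if gmove_loc mv = y then 1 else 0) = potential K (\<lambda>x. greenK adj K x y) s"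
proof -
  let ?h = "\<lambda>x. greenK adj K x y" and ?b = "gmove_loc mv"
  have b: "?b \<in> K" "0 < movers s ?b" using gvalid_movers[OF assms(3)] by auto
  have "(\<integral>\<^sup>+s'. potential K ?h s' \<partial>measure_pmf (gstep adj K s mv)) =
      potential_without K ?h s ?b + nbr_avg ?h ?b"
    using assms greenK_outside by (intro gstep_potential_moments(1)[where c = \<top>]) auto
  also have "\<dots> + (if ?b = y then 1 else 0) = potential_without K ?h s ?b + ?h ?b"
    using greenK_rec[OF assms(2), of ?b] b by (simp add: ac_simps)
  also have "\<dots> = potential K ?h s"
    using potential_remove[OF assms(1) b] by simp
  finally show ?thesis .
qed

lemma expected_green_potential_plus_jumps:
  assumes "finite K" "y \<in> K" "admissible_strategy K strat"
  shows "(\<integral>\<^sup>+hh. potential K (\<lambda>x. greenK adj K x y) (last (fst hh)) + of_nat (jumps_from y (snd hh))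
           \<partial>measure_pmf (ghost_run adj K strat s0 n)) = potential K (\<lambda>x. greenK adj K x y) s0"
proof (induction n)
  case (Suc n)
  let ?h = "\<lambda>x. greenK adj K x y"
  have "(\<integral>\<^sup>+s'. potential K ?h s' + of_nat (jumps_from y (snd hh @ [strat (fst hh)]))
      \<partial>measure_pmf (gstep adj K (last (fst hh)) (strat (fst hh)))) =
    potential K ?h (last (fst hh)) + of_nat (jumps_from y (snd hh))"
    if "hh \<in> set_pmf (ghost_run adj K strat s0 n)" "\<not> gterminal K (last (fst hh))" for hh
  proof -
    let ?\<mu> = "measure_pmf (gstep adj K (last (fst hh)) (strat (fst hh)))"
    let ?jump = "if gmove_loc (strat (fst hh)) = y then 1 else 0"
    have "(\<integral>\<^sup>+s'. potential K ?h s' + of_nat (jumps_from y (snd hh @ [strat (fst hh)])) \<partial>?\<mu>) =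
        ((\<integral>\<^sup>+s'. potential K ?h s' \<partial>?\<mu>) + ?jump) + of_nat (jumps_from y (snd hh))"
      by (simp add: jumps_from_snoc nn_integral_add measure_pmf.emeasure_space_1 ac_simps)
    then show ?thesis
      using green_potential_step[OF assms(1,2) ghost_run_gvalid[OF assms(3) that]] by simp
  qed
  then show ?case
    using Suc.IH by (subst nn_integral_ghost_run_Suc_eq) auto
qed (simp add: jumps_from_def)

text \<open>By \<open>f = 1 + nbr_avg f\<close> the potential drops by \<open>1\<close> on average in every step; the
  bound \<open>2 * c\<close> on its increments is absorbed into \<open>C\<close>.\<close>
lemma lyapunov_step:
  assumes valid: "gvalid K s mv" and K: "finite K" and f0: "\<And>x. x \<notin> K \<Longrightarrow> f x = 0"
    and fc: "\<And>x. f x \<le> c" and f_rec: "\<And>b. b \<in> K \<Longrightarrow> f b = 1 + nbr_avg f b"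
  defines "C \<equiv> (2 * c)\<^sup>2 + 2 * c"
  shows "(\<integral>\<^sup>+s'. (potential K f s')\<^sup>2 + C * potential K f s' \<partial>measure_pmf (gstep adj K s mv))
          + 2 * potential K f s \<le> (potential K f s)\<^sup>2 + C * potential K f s"
proof -
  let ?b = "gmove_loc mv"
  define R where "R = potential_without K f s ?b"
  define A where "A = nbr_avg f ?b"
  define B where "B = f ?b"
  have b: "?b \<in> K" "0 < movers s ?b" using gvalid_movers[OF valid] by auto
  have BA: "B = 1 + A" unfolding A_def B_def using f_rec[OF b(1)] .
  have pot: "potential K f s = R + B"
    using potential_remove[OF K b] by (simp add: R_def B_def)
  have "(\<integral>\<^sup>+s'. (potential K f s')\<^sup>2 + C * potential K f s' \<partial>measure_pmf (gstep adj K s mv))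
      = (\<integral>\<^sup>+s'. (potential K f s')\<^sup>2 \<partial>measure_pmf (gstep adj K s mv)) + C * (R + A)"
    using gstep_potential_moments(1)[OF valid K f0 fc]
    by (simp add: nn_integral_add nn_integral_cmult R_def A_def)
  also have "\<dots> \<le> R\<^sup>2 + 2 * R * A + (2 * c)\<^sup>2 + C * (R + A)"
    using gstep_potential_moments(2)[OF valid K f0 fc]
    by (intro add_right_mono) (simp add: R_def A_def)
  finally have "(\<integral>\<^sup>+s'. (potential K f s')\<^sup>2 + C * potential K f s' \<partial>measure_pmf (gstep adj K s mv))
      + 2 * potential K f s \<le> R\<^sup>2 + 2 * R * A + (2 * c)\<^sup>2 + C * (R + A) + 2 * (R + B)"
    unfolding pot by (rule add_right_mono)
  also have "\<dots> \<le> (R + B)\<^sup>2 + C * (R + B)"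
    using BA fc[of ?b] unfolding B_def C_def by (rule ennreal_drift_bound)
  finally show ?thesis unfolding pot .
qed

lemma lyapunov_sum_bound:
  assumes K: "finite K" and adm: "admissible_strategy K strat" and f0: "\<And>x. x \<notin> K \<Longrightarrow> f x = 0"
    and fc: "\<And>x. f x \<le> c" and f_rec: "\<And>b. b \<in> K \<Longrightarrow> f b = 1 + nbr_avg f b"
  defines "C \<equiv> (2 * c)\<^sup>2 + 2 * c"
  shows "2 * (\<Sum>t<n. \<integral>\<^sup>+hh. potential K f (last (fst hh)) \<partial>measure_pmf (ghost_run adj K strat s0 t))
         \<le> (potential K f s0)\<^sup>2 + C * potential K f s0"
proof -
  let ?W = "\<lambda>hh. (potential K f (last (fst hh)))\<^sup>2 + C * potential K f (last (fst hh))"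
  let ?E = "\<lambda>F t. \<integral>\<^sup>+hh. F hh \<partial>measure_pmf (ghost_run adj K strat s0 t)"
  have "?E ?W n + 2 * (\<Sum>t<n. ?E (\<lambda>hh. potential K f (last (fst hh))) t)
      \<le> (potential K f s0)\<^sup>2 + C * potential K f s0"
  proof (induction n)
    case (Suc n)
    let ?P = "\<lambda>t. ?E (\<lambda>hh. potential K f (last (fst hh))) t"
    have "?E ?W (Suc n) + ?E (\<lambda>hh. 2 * potential K f (last (fst hh))) n \<le> ?E ?W n"
      using lyapunov_step[OF ghost_run_gvalid[OF adm] K f0 fc f_rec]
      by (intro nn_integral_ghost_run_Suc_le) (auto simp: C_def potential_terminal)
    then have step: "?E ?W (Suc n) + 2 * ?P n \<le> ?E ?W n"
      by (simp add: nn_integral_cmult)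
    have "?E ?W (Suc n) + 2 * (\<Sum>t<Suc n. ?P t) = (?E ?W (Suc n) + 2 * ?P n) + 2 * (\<Sum>t<n. ?P t)"
      by (simp add: distrib_left ac_simps)
    also have "\<dots> \<le> ?E ?W n + 2 * (\<Sum>t<n. ?P t)"
      using step by (rule add_right_mono)
    also have "\<dots> \<le> (potential K f s0)\<^sup>2 + C * potential K f s0"
      by (rule Suc.IH)
    finally show ?case .
  qed simp
  then show ?thesis
    by (rule order_trans[rotated]) simp
qed

end

lemma ennreal_exists_small_term:
  fixes a :: "nat \<Rightarrow> ennreal"
  assumes partial_sums: "\<And>n. (\<Sum>t<n. a t) \<le> W" and "W < \<top>" and "0 < e"
  shows "\<exists>n. a n \<le> ennreal e"
proof (rule ccontr)
  assume "\<not> ?thesis"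
  then have large: "ennreal e \<le> a n" for n by (meson linear)
  obtain w where w: "0 \<le> w" "W = ennreal w" using \<open>W < \<top>\<close> less_top_ennreal by blast
  define N where "N = Suc (nat \<lceil>w / e\<rceil>)"
  have "ennreal (real N * e) = (\<Sum>t<N. ennreal e)"
    using \<open>0 < e\<close> by (simp add: ennreal_mult ennreal_of_nat_eq_real_of_nat)
  also have "\<dots> \<le> (\<Sum>t<N. a t)" by (intro sum_mono large)
  also have "\<dots> \<le> ennreal w" using partial_sums w by simp
  finally have "real N * e \<le> w" using w by (simp add: ennreal_le_iff)
  moreover have "w < real N * e"
  proof -
    have "w / e < real N" unfolding N_def by linarith
    then show ?thesis using \<open>0 < e\<close> by (simp add: divide_less_eq)
  qed
  ultimately show False by simp
qed

lemma SUP_eq_if_remainder_small: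
  fixes a b :: "nat \<Rightarrow> ennreal"
  assumes sum: "\<And>n. a n + b n = c" and small: "\<And>e. 0 < e \<Longrightarrow> \<exists>n. b n \<le> ennreal e"
  shows "(SUP n. a n) = c"
proof (rule antisym)
  show "(SUP n. a n) \<le> c"
    by (rule SUP_least) (metis sum add_increasing2 order_refl zero_le)
  show "c \<le> (SUP n. a n)"
  proof (rule ennreal_le_epsilon)
    fix e :: real assume "0 < e"
    then obtain n where "b n \<le> ennreal e" using small by blast
    then have "a n + b n \<le> (SUP n. a n) + ennreal e"
      by (intro add_mono SUP_upper) auto
    then show "c \<le> (SUP n. a n) + ennreal e" by (simp add: sum)
  qed
qed

context connected_infinite_graph
begin

lemma expected_green_potential_small:
  assumes K: "finite K" and "y \<in> K" and adm: "admissible_strategy K strat" and "0 < e"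
  shows "\<exists>n. (\<integral>\<^sup>+hh. potential K (\<lambda>x. greenK adj K x y) (last (fst hh))
               \<partial>measure_pmf (ghost_run adj K strat s0 n)) \<le> ennreal e"
proof -
  let ?T = "expected_exit_time K"
  let ?E = "\<lambda>f t. \<integral>\<^sup>+hh. potential K f (last (fst hh)) \<partial>measure_pmf (ghost_run adj K strat s0 t)"
  define c where "c = (\<Sum>x\<in>K. ?T x)"
  have T_le_c: "?T x \<le> c" for x
    by (cases "x \<in> K") (auto simp: c_def K expected_exit_time_outside intro: member_le_sum)
  have "c < \<top>" using K by (simp add: c_def expected_exit_time_finite)
  moreover have "potential K ?T s0 < \<top>"
    using K by (simp add: potential_finite expected_exit_time_finite)
  ultimately have W0: "(potential K ?T s0)\<^sup>2 + ((2 * c)\<^sup>2 + 2 * c) * potential K ?T s0 < \<top>"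
    by (simp add: ennreal_mult_less_top power_less_top_ennreal)
  have twice: "2 * (\<Sum>t<n. ?E ?T t) \<le> (potential K ?T s0)\<^sup>2 + ((2 * c)\<^sup>2 + 2 * c) * potential K ?T s0" for n
    by (rule lyapunov_sum_bound[OF K adm expected_exit_time_outside T_le_c expected_exit_time_rec[OF K]])
  have "(\<Sum>t<n. ?E ?T t) \<le> (potential K ?T s0)\<^sup>2 + ((2 * c)\<^sup>2 + 2 * c) * potential K ?T s0" for n
    using twice[of n] by (rule order_trans[rotated]) (simp add: mult_2 add_increasing2)
  then obtain n where "?E ?T n \<le> ennreal e"
    using ennreal_exists_small_term[OF _ W0 \<open>0 < e\<close>] by blast
  moreover have "?E (\<lambda>x. greenK adj K x y) n \<le> ?E ?T n"
    using greenK_le_expected_exit_time[OF K \<open>y \<in> K\<close>]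
    by (intro nn_integral_mono potential_mono)
  ultimately show ?thesis by (meson order_trans)
qed

end

theorem lemma3p3:
  fixes adj :: "'v \<Rightarrow> 'v \<Rightarrow> bool"
    and K :: "'v set" and y :: 'v
    and eo ew :: "'v \<Rightarrow> nat"
    and strat :: "'v gstate list \<Rightarrow> 'v gmove"
  assumes "infinite_vt_graph_finite_degree adj"
    and "finite K" and "y \<in> K"
    and "unstable_config eo ew"
    and "admissible_strategy K strat"
  shows "ghost_expected_jumps adj K strat eo ew y =
           (\<Sum>x\<in>K. of_nat (min (eo x) (ew x)) * greenK adj K x y)"
proof -
  interpret connected_infinite_graph adj
    using assms(1) by (rule infinite_vt_graph_finite_degree_imp_connected_infinite_graph)
  let ?h = "\<lambda>x. greenK adj K x y" and ?s0 = "(eo, ew, \<lambda>_. 0)"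
  let ?E = "\<lambda>F n. \<integral>\<^sup>+hh. F hh \<partial>measure_pmf (ghost_run adj K strat ?s0 n)"
  have "?E (\<lambda>hh. of_nat (jumps_from y (snd hh))) n + ?E (\<lambda>hh. potential K ?h (last (fst hh))) n
      = potential K ?h ?s0" for n
    using expected_green_potential_plus_jumps[OF assms(2,3,5), of ?s0 n]
    by (simp add: nn_integral_add add.commute)
  then have "ghost_expected_jumps adj K strat eo ew y = potential K ?h ?s0"
    unfolding ghost_expected_jumps_def
    using expected_green_potential_small[OF assms(2,3,5)] by (rule SUP_eq_if_remainder_small)
  then show ?thesis by (simp add: potential_def)
qed

end
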